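(* Let $F$ be a $2$-dimensional freezing cellular automaton with neighborhood $\mathrm{VN}_2$, let $c$ be a configuration, $z\in\mathbb{Z}^2$ and $t\geq1$ with $F^t(c)_z\neq c_z$. Then there exist a position $z'$ which is unstable in $c$ and a changing path of length at most $t$ from $z$ to $z'$ between the configurations $c$ and $F^t(c)$.
   Context: A $2$-dimensional cellular automaton is $F=(2,Q,N,f)$ with $Q$ finite, $N\subset\mathbb{Z}^2$ finite, $f:Q^N\to Q$, global map $F(c)_z=f(c|_{z+N})$; it is freezing if there is a partial order $\preceq$ on $Q$ with $F(c)_z\preceq c_z$ for all $c,z$. $\mathrm{VN}_2=\{(0,0),(\pm1,0),(0,\pm1)\}$. A position $z$ is stable in $c$ if $F(c)_z=c_z$ and unstable otherwise. A changing path from $z$ to $z'$ between configurations $c$ and $F^t(c)$ is a sequence $z_1,\dots,z_n$ of positions with $z_1=z$, $z_n=z'$, $z_{i+1}\in z_i+\mathrm{VN}_2$ for all $i<n$, and $c_{z_i}\neq F^t(c)_{z_i}$ for all $i$; its length is $n$. *)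

theory Defs
  imports Main
begin

type_synonym pos = "int \<times> int"

definition add_pos :: "pos \<Rightarrow> pos \<Rightarrow> pos" where
  "add_pos z n = (fst z + fst n, snd z + snd n)"

definition VN2 :: "pos set" where
  "VN2 = {(0,0), (1,0), (-1,0), (0,1), (0,-1)}"

text \<open>Global map of the CA with neighbourhood N and local rule f : Q^N -> Q.
  A pattern in Q^N is represented as a function pos => 'q that is
  'undefined' outside N, so f only sees c restricted to z+N.\<close>
definition global_map :: "pos set \<Rightarrow> ((pos \<Rightarrow> 'q) \<Rightarrow> 'q) \<Rightarrow> (pos \<Rightarrow> 'q) \<Rightarrow> (pos \<Rightarrow> 'q)" where
  "global_map N f c = (\<lambda>z. f (\<lambda>n. if n \<in> N then c (add_pos z n) else undefined))"

definition freezing :: "pos set \<Rightarrow> ((pos \<Rightarrow> 'q) \<Rightarrow> 'q) \<Rightarrow> bool" where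
  "freezing N f = (\<exists>le :: 'q \<Rightarrow> 'q \<Rightarrow> bool.
      (\<forall>a. le a a) \<and> (\<forall>a b. le a b \<longrightarrow> le b a \<longrightarrow> a = b) \<and>
      (\<forall>a b d. le a b \<longrightarrow> le b d \<longrightarrow> le a d) \<and>
      (\<forall>c z. le (global_map N f c z) (c z)))"

definition unstable :: "pos set \<Rightarrow> ((pos \<Rightarrow> 'q) \<Rightarrow> 'q) \<Rightarrow> (pos \<Rightarrow> 'q) \<Rightarrow> pos \<Rightarrow> bool" where
  "unstable N f c z = (global_map N f c z \<noteq> c z)"

text \<open>A changing path from z to z' between c and c' (= F^t c): a nonempty list
  of positions, consecutive ones VN2-adjacent, all of whose cells differ in c and c'.
  Its length is the length of the list.\<close>
definition changing_path :: "(pos \<Rightarrow> 'q) \<Rightarrow> (pos \<Rightarrow> 'q) \<Rightarrow> pos \<Rightarrow> pos \<Rightarrow> pos list \<Rightarrow> bool" where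
  "changing_path c c' z z' p = (p \<noteq> [] \<and> hd p = z \<and> last p = z' \<and>
      (\<forall>i. Suc i < length p \<longrightarrow> p ! Suc i \<in> add_pos (p ! i) ` VN2) \<and>
      (\<forall>i < length p. c (p ! i) \<noteq> c' (p ! i)))"

end

theory Submission
  imports Defs
begin

text \<open>If z is unstable in c, the one-cell path [z] works. Otherwise
  F(c)_z = c_z while F(F^(t-1)(c))_z differs from it, so F^(t-1)(c) and c differ at some
  VN2-neighbour of z; a path of length at most t-1 from there exists by induction, and
  prefixing z gives the required path, since in a freezing CA a cell that has changed
  by time t-1 is still changed at time t.\<close>

lemma decreasing_funpow_le:
  fixes G :: "('a \<Rightarrow> 'q) \<Rightarrow> 'a \<Rightarrow> 'q"
  assumes refl: "\<And>a. le a a" and trans: "\<And>a b d. le a b \<Longrightarrow> le b d \<Longrightarrow> le a d"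
    and decreasing: "\<And>c z. le (G c z) (c z)"
    and "k \<le> m"
  shows "le ((G ^^ m) c z) ((G ^^ k) c z)"
  using \<open>k \<le> m\<close>
proof (induction m rule: dec_induct)
  case base
  show ?case by (rule refl)
next
  case (step m)
  have "le ((G ^^ Suc m) c z) ((G ^^ m) c z)"
    using decreasing by simp
  then show ?case using step.IH trans by blast
qed

lemma freezing_change_persists:
  assumes "freezing N f" and "(global_map N f ^^ k) c z \<noteq> c z" and "k \<le> m"
  shows "(global_map N f ^^ m) c z \<noteq> c z"
proof
  let ?F = "global_map N f"
  assume unchanged: "(?F ^^ m) c z = c z"
  from assms(1) obtain le where refl: "\<And>a. le a a"
    and antisym: "\<And>a b. le a b \<Longrightarrow> le b a \<Longrightarrow> a = b"
    and trans: "\<And>a b d. le a b \<Longrightarrow> le b d \<Longrightarrow> le a d"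
    and decreasing: "\<And>c z. le (?F c z) (c z)"
    unfolding freezing_def by blast
  have "le ((?F ^^ m) c z) ((?F ^^ k) c z)"
    using decreasing_funpow_le[where G = ?F, OF refl trans decreasing \<open>k \<le> m\<close>] .
  moreover have "le ((?F ^^ k) c z) ((?F ^^ 0) c z)"
    using decreasing_funpow_le[where G = ?F and k = 0 and m = k, OF refl trans decreasing] by simp
  ultimately show False
    using unchanged antisym assms(2) by simp
qed

lemma global_map_differs_neighbour:
  assumes "global_map N f c z \<noteq> global_map N f d z"
  obtains n where "n \<in> N" and "c (add_pos z n) \<noteq> d (add_pos z n)"
  using assms unfolding global_map_def by (metis (no_types, lifting))

lemma changing_path_singleton:
  assumes "c z \<noteq> c' z"
  shows "changing_path c c' z z [z]"
  using assms by (simp add: changing_path_def)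

lemma changing_path_Cons:
  assumes path: "changing_path c c' w z' p"
    and adjacent: "w \<in> add_pos z ` VN2" and changed: "c z \<noteq> c' z"
  shows "changing_path c c' z z' (z # p)"
  unfolding changing_path_def
proof (intro conjI allI impI)
  show "last (z # p) = z'" using path by (simp add: changing_path_def)
next
  fix i assume "Suc i < length (z # p)"
  then show "(z # p) ! Suc i \<in> add_pos ((z # p) ! i) ` VN2"
    using path adjacent by (cases i) (auto simp: changing_path_def hd_conv_nth)
next
  fix i assume "i < length (z # p)"
  then show "c ((z # p) ! i) \<noteq> c' ((z # p) ! i)"
    using path changed by (cases i) (auto simp: changing_path_def)
qed simp_all

lemma changing_path_mono:
  assumes "changing_path c d z z' p" and "\<And>w. c w \<noteq> d w \<Longrightarrow> c w \<noteq> d' w"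
  shows "changing_path c d' z z' p"
  using assms by (simp add: changing_path_def)

lemma freezing_changing_path_to_unstable:
  fixes f :: "(pos \<Rightarrow> 'q) \<Rightarrow> 'q"
  assumes freezing: "freezing VN2 f"
    and changed: "(global_map VN2 f ^^ t) c z \<noteq> c z"
  shows "\<exists>z' p. unstable VN2 f c z' \<and> changing_path c ((global_map VN2 f ^^ t) c) z z' p
               \<and> length p \<le> t"
  using changed
proof (induction t arbitrary: z)
  case 0
  then show ?case by simp
next
  case (Suc k)
  let ?F = "global_map VN2 f"
  show ?case
  proof (cases "unstable VN2 f c z")
    case True
    then show ?thesis
      using changing_path_singleton[of c z "(?F ^^ Suc k) c"] Suc.prems
      by (intro exI[of _ z] exI[of _ "[z]"]) simp
  next
    case False
    then have "?F ((?F ^^ k) c) z \<noteq> ?F c z"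
      using Suc.prems by (simp add: unstable_def)
    then obtain n where "n \<in> VN2" and neighbour_changed: "(?F ^^ k) c (add_pos z n) \<noteq> c (add_pos z n)"
      by (rule global_map_differs_neighbour)
    then obtain z' p where "unstable VN2 f c z'" and "length p \<le> k"
      and path: "changing_path c ((?F ^^ k) c) (add_pos z n) z' p"
      using Suc.IH by blast
    have "changing_path c ((?F ^^ Suc k) c) (add_pos z n) z' p"
    proof (rule changing_path_mono[OF path])
      fix w assume "c w \<noteq> (?F ^^ k) c w"
      then show "c w \<noteq> (?F ^^ Suc k) c w"
        using freezing_change_persists[OF freezing, of k c w "Suc k"] by auto
    qed
    moreover have "add_pos z n \<in> add_pos z ` VN2"
      using \<open>n \<in> VN2\<close> by (rule imageI)
    moreover have "c z \<noteq> (?F ^^ Suc k) c z"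
      using Suc.prems by simp
    ultimately have "changing_path c ((?F ^^ Suc k) c) z z' (z # p)"
      by (rule changing_path_Cons)
    with \<open>unstable VN2 f c z'\<close> \<open>length p \<le> k\<close> show ?thesis
      by (intro exI[of _ z'] exI[of _ "z # p"]) simp
  qed
qed

theorem mainTheorem8:
  fixes f :: "(pos \<Rightarrow> 'q::finite) \<Rightarrow> 'q" and c :: "pos \<Rightarrow> 'q" and z :: pos and t :: nat
  assumes "freezing VN2 f"
    and "t \<ge> 1"
    and "(global_map VN2 f ^^ t) c z \<noteq> c z"
  shows "\<exists>z' p. unstable VN2 f c z' \<and> changing_path c ((global_map VN2 f ^^ t) c) z z' p
               \<and> length p \<le> t"
  using freezing_changing_path_to_unstable[OF assms(1,3)] .

end
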